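(* Let $m\ge 1$ and $n,k$ be positive integers. For $v=1,\dots,m$ let $X^{(v)}$ be a real $n\times p_v$ centered data matrix ($n$ samples, $p_v$ variables), let $X=[X^{(1)},\dots,X^{(m)}]$ be the $n\times p$ multiview data matrix with $p=p_1+\cdots+p_m$, and let $K^{(v)}=X^{(v)}{X^{(v)}}^T$. Let $X=UDV^T$ be a singular value decomposition of $X$ ($U$ an $n\times n$ orthogonal matrix, $V$ a $p\times p$ orthogonal matrix, $D$ an $n\times p$ rectangular diagonal matrix) with singular values ordered $\sigma_1\ge\sigma_2\ge\cdots$, so that the columns of $U$ are eigenvectors of $XX^T$ and the columns of $V$ are eigenvectors of $X^TX$ ordered by non-increasing eigenvalue. Let $U_k$ be the $n\times k$ matrix of the first $k$ columns of $U$, let $Q$ be an arbitrary $k\times k$ orthogonal matrix, and put $H=U_kQ$. Write $V^T=[{V^{(1)}}^T,\dots,{V^{(m)}}^T]$ where ${V^{(v)}}^T$ is the $p\times p_v$ block of columns of $V^T$ corresponding to the variables of view $v$, and let ${V_{1:k}^{(v)}}^T$ be the $k\times p_v$ matrix consisting of the top $k$ rows of ${V^{(v)}}^T$. Then for every $v=1,\dots,m$, $$\mathrm{tr}\big(H^TK^{(v)}H\big)=\mathrm{tr}\big({V_{1:k}^{(v)}}^T{X^{(v)}}^TX^{(v)}V_{1:k}^{(v)}\big)+\sum_{w\neq v}\mathrm{tr}\big({V_{1:k}^{(v)}}^T{X^{(v)}}^TX^{(w)}V_{1:k}^{(w)}\big).$$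
   Context: All matrices are real; $\mathrm{tr}$ denotes the trace. *)

theory Defs
  imports "Jordan_Normal_Form.Matrix"
begin

(* Views are indexed v = 0, ..., m-1 (the paper uses 1, ..., m). *)

definition mat_trace :: "real mat \<Rightarrow> real" where
  "mat_trace A = (\<Sum>i<dim_row A. A $$ (i,i))"

definition view_offset :: "(nat \<Rightarrow> nat) \<Rightarrow> nat \<Rightarrow> nat" where
  "view_offset p v = (\<Sum>w<v. p w)"

definition centered :: "real mat \<Rightarrow> bool" where
  "centered A \<longleftrightarrow> (\<forall>j<dim_col A. (\<Sum>i<dim_row A. A $$ (i,j)) = 0)"

(* X = [X^(0), ..., X^(m-1)], an n x (p 0 + ... + p (m-1)) matrix *)
definition multiview :: "nat \<Rightarrow> nat \<Rightarrow> (nat \<Rightarrow> nat) \<Rightarrow> (nat \<Rightarrow> real mat) \<Rightarrow> real mat" where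
  "multiview n m p Xs = mat n (\<Sum>w<m. p w)
     (\<lambda>(i,j). let v = (LEAST v. j < view_offset p (Suc v))
              in Xs v $$ (i, j - view_offset p v))"

definition orthogonal_real_mat :: "nat \<Rightarrow> real mat \<Rightarrow> bool" where
  "orthogonal_real_mat d A \<longleftrightarrow> A \<in> carrier_mat d d \<and>
     transpose_mat A * A = 1\<^sub>m d \<and> A * transpose_mat A = 1\<^sub>m d"

definition ordered_rect_diag :: "real mat \<Rightarrow> bool" where
  "ordered_rect_diag D \<longleftrightarrow>
     (\<forall>i<dim_row D. \<forall>j<dim_col D. i \<noteq> j \<longrightarrow> D $$ (i,j) = 0) \<and>
     (\<forall>i<min (dim_row D) (dim_col D). D $$ (i,i) \<ge> 0) \<and>
     (\<forall>i j. i \<le> j \<longrightarrow> j < min (dim_row D) (dim_col D) \<longrightarrow> D $$ (j,j) \<le> D $$ (i,i))"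

definition first_cols :: "nat \<Rightarrow> real mat \<Rightarrow> real mat" where
  "first_cols k A = mat (dim_row A) k (\<lambda>(i,j). A $$ (i,j))"

definition top_rows :: "nat \<Rightarrow> real mat \<Rightarrow> real mat" where
  "top_rows k A = mat k (dim_col A) (\<lambda>(i,j). A $$ (i,j))"

definition view_block_Vt :: "(nat \<Rightarrow> nat) \<Rightarrow> real mat \<Rightarrow> nat \<Rightarrow> real mat" where
  "view_block_Vt p V v = (let Vt = transpose_mat V in
     mat (dim_row Vt) (p v) (\<lambda>(i,j). Vt $$ (i, view_offset p v + j)))"

definition V_view_top :: "(nat \<Rightarrow> nat) \<Rightarrow> nat \<Rightarrow> real mat \<Rightarrow> nat \<Rightarrow> real mat" where
  "V_view_top p k V v = transpose_mat (top_rows k (view_block_Vt p V v))"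

end

theory Submission
  imports Defs
begin

(* From X = U D V^T one gets X^T U_k = V_k S^T and X V_k = U_k S, where S is the leading
   k x k block of D. Taking the rows of view v in the first identity gives
   G := X^(v)^T U_k = V^(v)_{1:k} S^T. The left-hand side is tr(Q^T G^T G Q) = tr(G^T G),
   while by block multiplication the sum over w on the right-hand side is
   tr(V^(v)_{1:k}^T X^(v)^T X V_k) = tr(V^(v)_{1:k}^T G S), which is tr(G^T G) after a cyclic
   permutation. Centering and the ordering of the singular values play no role. *)

lemma assoc_mult_mat_dim:
  "dim_col A = dim_row B \<Longrightarrow> dim_col B = dim_row C \<Longrightarrow> A * B * C = A * (B * C)"
  by (rule assoc_mult_mat[of A "dim_row A" "dim_col A" B "dim_col B" C "dim_col C"]) auto

lemma transpose_mult_dim: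
  "dim_col A = dim_row B \<Longrightarrow> transpose_mat (A * B) = transpose_mat B * transpose_mat (A :: 'a :: comm_semiring_0 mat)"
  by (rule transpose_mult[of A "dim_row A" "dim_col A" B "dim_col B"]) auto

lemma mat_trace_mult:
  assumes "A \<in> carrier_mat a b" "B \<in> carrier_mat b a"
  shows "mat_trace (A * B) = (\<Sum>i<a. \<Sum>l<b. A $$ (i,l) * B $$ (l,i))"
  using assms by (simp add: mat_trace_def scalar_prod_def lessThan_atLeast0)

lemma mat_trace_mult_comm:
  assumes "A \<in> carrier_mat a b" "B \<in> carrier_mat b a"
  shows "mat_trace (A * B) = mat_trace (B * A)"
proof -
  have "mat_trace (A * B) = (\<Sum>i<a. \<Sum>l<b. A $$ (i,l) * B $$ (l,i))"
    using assms by (rule mat_trace_mult)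
  also have "\<dots> = (\<Sum>l<b. \<Sum>i<a. B $$ (l,i) * A $$ (i,l))"
    by (subst sum.swap) (simp add: mult.commute)
  also have "\<dots> = mat_trace (B * A)"
    using assms by (simp add: mat_trace_mult)
  finally show ?thesis .
qed

lemma mat_trace_orthogonal_conj:
  assumes "orthogonal_real_mat k Q" "M \<in> carrier_mat k k"
  shows "mat_trace (transpose_mat Q * M * Q) = mat_trace M"
proof -
  have Q: "Q \<in> carrier_mat k k" and QQt: "Q * transpose_mat Q = 1\<^sub>m k"
    using assms(1) by (auto simp: orthogonal_real_mat_def)
  have "mat_trace (transpose_mat Q * M * Q) = mat_trace (Q * (transpose_mat Q * M))"
    using Q assms(2) by (intro mat_trace_mult_comm[of _ k k]) auto
  also have "Q * (transpose_mat Q * M) = M"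
    using Q assms(2) by (simp flip: assoc_mult_mat_dim add: QQt)
  finally show ?thesis .
qed

definition col_block :: "nat \<Rightarrow> nat \<Rightarrow> 'a mat \<Rightarrow> 'a mat" where
  "col_block a q A = mat (dim_row A) q (\<lambda>(i,j). A $$ (i, a + j))"

definition row_block :: "nat \<Rightarrow> nat \<Rightarrow> 'a mat \<Rightarrow> 'a mat" where
  "row_block a q A = mat q (dim_col A) (\<lambda>(i,j). A $$ (a + i, j))"

lemma col_block_carrier [simp]: "col_block a q A \<in> carrier_mat (dim_row A) q"
  by (simp add: col_block_def)

lemma row_block_carrier [simp]: "row_block a q A \<in> carrier_mat q (dim_col A)"
  by (simp add: row_block_def)

lemma first_cols_eq_col_block: "first_cols k A = col_block 0 k A"
  by (simp add: first_cols_def col_block_def)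

lemma col_block_mult:
  assumes "a + q \<le> dim_col B"
  shows "col_block a q (A * B) = A * col_block a q B"
  using assms by (intro eq_matI) (auto simp: col_block_def scalar_prod_def)

lemma row_block_mult:
  assumes "a + q \<le> dim_row A"
  shows "row_block a q (A * B) = row_block a q A * B"
  using assms by (intro eq_matI) (auto simp: row_block_def row_def intro!: arg_cong[where f="\<lambda>x. x \<bullet> _"])

lemma transpose_col_block:
  assumes "a + q \<le> dim_col A"
  shows "transpose_mat (col_block a q A) = row_block a q (transpose_mat A)"
  using assms by (intro eq_matI) (auto simp: col_block_def row_block_def)

lemma view_offset_Suc: "view_offset p (Suc v) = view_offset p v + p v"
  by (simp add: view_offset_def)

lemma view_offset_mono: "v \<le> w \<Longrightarrow> view_offset p v \<le> view_offset p w"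
  unfolding view_offset_def by (rule sum_mono2) auto

lemma view_offset_add_le: "v < m \<Longrightarrow> view_offset p v + p v \<le> view_offset p m"
  using view_offset_mono[of "Suc v" m p] by (simp add: view_offset_Suc)

lemma sum_view_offset_blocks:
  "(\<Sum>a<view_offset p m. f a) = (\<Sum>w<m. \<Sum>j<p w. f (view_offset p w + j) :: 'a :: comm_monoid_add)"
proof (induction m)
  case 0
  then show ?case by (simp add: view_offset_def)
next
  case (Suc m)
  have "(\<Sum>a<view_offset p m + p m. f a)
      = (\<Sum>a<view_offset p m. f a) + (\<Sum>a=view_offset p m..<view_offset p m + p m. f a)"
    by (simp add: lessThan_atLeast0 sum.atLeastLessThan_concat)
  also have "(\<Sum>a=view_offset p m..<view_offset p m + p m. f a) = (\<Sum>j<p m. f (view_offset p m + j))"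
    using sum.shift_bounds_nat_ivl[of f 0 "view_offset p m" "p m"]
    by (simp add: lessThan_atLeast0 add.commute)
  finally show ?case using Suc by (simp add: view_offset_Suc)
qed

lemma mult_mat_eq_sum_view_blocks:
  assumes "A \<in> carrier_mat r (view_offset p m)" "B \<in> carrier_mat (view_offset p m) c"
    and "i < r" "j < c"
  shows "(A * B) $$ (i,j) =
    (\<Sum>w<m. (col_block (view_offset p w) (p w) A * row_block (view_offset p w) (p w) B) $$ (i,j))"
proof -
  have "(A * B) $$ (i,j) = (\<Sum>a<view_offset p m. A $$ (i,a) * B $$ (a,j))"
    using assms by (simp add: scalar_prod_def lessThan_atLeast0)
  also have "\<dots> = (\<Sum>w<m. \<Sum>l<p w. A $$ (i, view_offset p w + l) * B $$ (view_offset p w + l, j))"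
    by (rule sum_view_offset_blocks)
  also have "\<dots> = (\<Sum>w<m. (col_block (view_offset p w) (p w) A * row_block (view_offset p w) (p w) B) $$ (i,j))"
    using assms view_offset_add_le[of _ m p]
    by (intro sum.cong refl) (auto simp: col_block_def row_block_def scalar_prod_def lessThan_atLeast0)
  finally show ?thesis .
qed

lemma mat_trace_mult_sum_view_blocks:
  assumes C: "C \<in> carrier_mat c r"
    and A: "A \<in> carrier_mat r (view_offset p m)" and B: "B \<in> carrier_mat (view_offset p m) c"
  shows "mat_trace (C * (A * B)) =
    (\<Sum>w<m. mat_trace (C * col_block (view_offset p w) (p w) A * row_block (view_offset p w) (p w) B))"
proof -
  let ?blk = "\<lambda>w. col_block (view_offset p w) (p w) A * row_block (view_offset p w) (p w) B"
  have colb: "col_block (view_offset p w) (p w) A \<in> carrier_mat r (p w)" for w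
    using A col_block_carrier by (metis carrier_matD(1))
  have rowb: "row_block (view_offset p w) (p w) B \<in> carrier_mat (p w) c" for w
    using B row_block_carrier by (metis carrier_matD(2))
  have blk: "?blk w \<in> carrier_mat r c" for w
    using colb rowb by (rule mult_carrier_mat)
  have "mat_trace (C * (A * B)) = (\<Sum>i<c. \<Sum>l<r. C $$ (i,l) * (A * B) $$ (l,i))"
    using A B C by (intro mat_trace_mult) auto
  also have "\<dots> = (\<Sum>i<c. \<Sum>l<r. \<Sum>w<m. C $$ (i,l) * ?blk w $$ (l,i))"
    by (intro sum.cong refl)
      (simp add: mult_mat_eq_sum_view_blocks[OF A B] sum_distrib_left del: index_mult_mat)
  also have "\<dots> = (\<Sum>w<m. \<Sum>i<c. \<Sum>l<r. C $$ (i,l) * ?blk w $$ (l,i))"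
    by (simp add: sum.swap[of _ "{..<m}"] sum.swap[of _ _ "{..<r}"])
  also have "\<dots> = (\<Sum>w<m. mat_trace (C * ?blk w))"
    using C blk by (simp add: mat_trace_mult)
  also have "\<dots> = (\<Sum>w<m. mat_trace (C * col_block (view_offset p w) (p w) A * row_block (view_offset p w) (p w) B))"
    using assoc_mult_mat[OF C colb rowb] by simp
  finally show ?thesis .
qed

lemma multiview_col_block:
  assumes "v < m" "Xs v \<in> carrier_mat n (p v)"
  shows "col_block (view_offset p v) (p v) (multiview n m p Xs) = Xs v"
proof -
  have view: "(LEAST u. view_offset p v + j < view_offset p (Suc u)) = v" if "j < p v" for j
  proof (rule Least_equality)
    show "view_offset p v + j < view_offset p (Suc v)"
      using that by (simp add: view_offset_Suc)
  next
    fix u assume "view_offset p v + j < view_offset p (Suc u)"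
    then show "v \<le> u"
      using view_offset_mono[of "Suc u" v p] by (metis le_add1 not_less not_less_eq_eq order.trans)
  qed
  have "view_offset p v + p v \<le> (\<Sum>w<m. p w)"
    using view_offset_add_le[OF assms(1)] by (simp add: view_offset_def)
  with assms(2) show ?thesis
    by (intro eq_matI) (auto simp: col_block_def multiview_def view)
qed

lemma V_view_top_eq_row_block:
  assumes "k \<le> dim_col V" "view_offset p v + p v \<le> dim_row V"
  shows "V_view_top p k V v = row_block (view_offset p v) (p v) (first_cols k V)"
  using assms
  by (intro eq_matI) (auto simp: V_view_top_def top_rows_def view_block_Vt_def row_block_def first_cols_def)

definition leading_block :: "nat \<Rightarrow> 'a mat \<Rightarrow> 'a mat" where
  "leading_block k D = mat k k (\<lambda>(i,j). D $$ (i,j))"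

lemma leading_block_transpose:
  assumes "k \<le> dim_row D" "k \<le> dim_col D"
  shows "leading_block k (transpose_mat D) = transpose_mat (leading_block k D)"
  using assms by (intro eq_matI) (auto simp: leading_block_def)

lemma first_cols_mult_rect_diag:
  assumes B: "B \<in> carrier_mat r c" and D: "D \<in> carrier_mat c d"
    and diag: "\<And>i j. i < c \<Longrightarrow> j < d \<Longrightarrow> i \<noteq> j \<Longrightarrow> D $$ (i,j) = 0"
    and "k \<le> c" "k \<le> d"
  shows "first_cols k (B * D) = first_cols k B * leading_block k D"
proof (rule eq_matI)
  fix a i assume a: "a < dim_row (first_cols k B * leading_block k D)"
    and i: "i < dim_col (first_cols k B * leading_block k D)"
  have "(\<Sum>l<c. B $$ (a,l) * D $$ (l,i)) = B $$ (a,i) * D $$ (i,i)"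
    using assms a i by (subst sum.remove[of _ i]) (auto simp: first_cols_def leading_block_def intro!: sum.neutral)
  moreover have "(\<Sum>l<k. B $$ (a,l) * D $$ (l,i)) = B $$ (a,i) * D $$ (i,i)"
    using assms a i by (subst sum.remove[of _ i]) (auto simp: first_cols_def leading_block_def intro!: sum.neutral)
  ultimately show "first_cols k (B * D) $$ (a,i) = (first_cols k B * leading_block k D) $$ (a,i)"
    using assms a i
    by (simp add: first_cols_def leading_block_def scalar_prod_def lessThan_atLeast0)
qed (auto simp: first_cols_def leading_block_def)

lemma svd_mult_right_singular:
  assumes U: "U \<in> carrier_mat n n" and D: "D \<in> carrier_mat n P" and "orthogonal_real_mat P V"
    and X: "X = U * D * transpose_mat V"
  shows "X * V = U * D"
proof -
  have V: "V \<in> carrier_mat P P" and "transpose_mat V * V = 1\<^sub>m P"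
    using assms(3) by (auto simp: orthogonal_real_mat_def)
  then show ?thesis
    using U D by (simp add: X assoc_mult_mat_dim)
qed

lemma svd_transpose_mult_left_singular:
  assumes "orthogonal_real_mat n U" and D: "D \<in> carrier_mat n P" and V: "V \<in> carrier_mat P P"
    and X: "X = U * D * transpose_mat V"
  shows "transpose_mat X * U = V * transpose_mat D"
proof -
  have U: "U \<in> carrier_mat n n" and "transpose_mat U * U = 1\<^sub>m n"
    using assms(1) by (auto simp: orthogonal_real_mat_def)
  then show ?thesis
    using D V by (simp add: X assoc_mult_mat_dim transpose_mult_dim)
qed

lemma svd_truncated:
  assumes U: "orthogonal_real_mat n U" and V: "orthogonal_real_mat P V"
    and D: "D \<in> carrier_mat n P"
    and diag: "\<And>i j. i < n \<Longrightarrow> j < P \<Longrightarrow> i \<noteq> j \<Longrightarrow> D $$ (i,j) = 0"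
    and X: "X = U * D * transpose_mat V" and "k \<le> n" "k \<le> P"
  shows "X * first_cols k V = first_cols k U * leading_block k D"
    and "transpose_mat X * first_cols k U = first_cols k V * transpose_mat (leading_block k D)"
proof -
  have Uc: "U \<in> carrier_mat n n" and Vc: "V \<in> carrier_mat P P"
    using U V by (auto simp: orthogonal_real_mat_def)
  have "X * first_cols k V = first_cols k (X * V)"
    using Vc \<open>k \<le> P\<close> by (simp add: first_cols_eq_col_block col_block_mult)
  also have "\<dots> = first_cols k U * leading_block k D"
    using svd_mult_right_singular[OF Uc D V X] first_cols_mult_rect_diag[OF Uc D diag] assms(6,7)
    by simp
  finally show "X * first_cols k V = first_cols k U * leading_block k D" .
  have "transpose_mat X * first_cols k U = first_cols k (transpose_mat X * U)"
    using Uc \<open>k \<le> n\<close> by (simp add: first_cols_eq_col_block col_block_mult)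
  also have "\<dots> = first_cols k V * leading_block k (transpose_mat D)"
    unfolding svd_transpose_mult_left_singular[OF U D Vc X]
    using D diag assms(6,7) by (intro first_cols_mult_rect_diag[OF Vc]) auto
  also have "leading_block k (transpose_mat D) = transpose_mat (leading_block k D)"
    using D assms(6,7) by (intro leading_block_transpose) auto
  finally show "transpose_mat X * first_cols k U = first_cols k V * transpose_mat (leading_block k D)" .
qed

lemma mat_trace_view_kernel_eq_cross:
  assumes Q: "orthogonal_real_mat k Q" and X: "X \<in> carrier_mat n P" and "a + q \<le> P"
    and Uk: "Uk \<in> carrier_mat n k" and Vk: "Vk \<in> carrier_mat P k" and S: "S \<in> carrier_mat k k"
    and right: "X * Vk = Uk * S" and left: "transpose_mat X * Uk = Vk * transpose_mat S"
  shows "mat_trace (transpose_mat (Uk * Q) * (col_block a q X * transpose_mat (col_block a q X)) * (Uk * Q))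
    = mat_trace (transpose_mat (row_block a q Vk) * transpose_mat (col_block a q X) * (X * Vk))"
proof -
  define Xv where "Xv = col_block a q X"
  define Vv where "Vv = row_block a q Vk"
  define G where "G = transpose_mat Xv * Uk"
  have Xv: "Xv \<in> carrier_mat n q" and Vv: "Vv \<in> carrier_mat q k"
    using X Vk by (auto simp: Xv_def Vv_def col_block_def row_block_def)
  have Qc: "Q \<in> carrier_mat k k"
    using Q by (simp add: orthogonal_real_mat_def)
  note dims = carrier_matD[OF Xv] carrier_matD[OF Vv] carrier_matD[OF Uk] carrier_matD[OF Qc]
    carrier_matD[OF S]
  have G: "G = Vv * transpose_mat S"
  proof - \<comment> \<open>rows of view v of the identity X^T U_k = V_k S^T\<close>
    have "G = row_block a q (transpose_mat X * Uk)"
      using X \<open>a + q \<le> P\<close> by (simp add: G_def Xv_def transpose_col_block row_block_mult)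
    then show ?thesis
      using Vk \<open>a + q \<le> P\<close> by (simp add: left Vv_def row_block_mult)
  qed
  have "transpose_mat (Uk * Q) * (Xv * transpose_mat Xv) * (Uk * Q)
      = transpose_mat Q * (transpose_mat G * G) * Q"
    by (simp add: G_def dims assoc_mult_mat_dim transpose_mult_dim)
  then have "mat_trace (transpose_mat (Uk * Q) * (Xv * transpose_mat Xv) * (Uk * Q))
      = mat_trace (transpose_mat G * G)"
    using mat_trace_orthogonal_conj[OF Q] mult_carrier_mat[of "transpose_mat G" k q G k] Xv Uk
    by (simp add: G_def)
  also have "\<dots> = mat_trace (S * (transpose_mat Vv * G))"
    by (simp add: G dims assoc_mult_mat_dim transpose_mult_dim)
  also have "\<dots> = mat_trace (transpose_mat Vv * G * S)"
    using S Vv Xv Uk by (simp add: G_def mat_trace_mult_comm[of S k k])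
  also have "\<dots> = mat_trace (transpose_mat Vv * transpose_mat Xv * (X * Vk))"
    by (simp add: right G_def dims assoc_mult_mat_dim)
  finally show ?thesis
    by (simp add: Xv_def Vv_def)
qed

lemma mat_trace_view_eq_sum_cross_traces:
  fixes Xs :: "nat \<Rightarrow> real mat"
  assumes "v < m" and Xs: "\<And>w. w < m \<Longrightarrow> Xs w \<in> carrier_mat n (p w)"
    and U: "orthogonal_real_mat n U" and V: "orthogonal_real_mat (view_offset p m) V"
    and D: "D \<in> carrier_mat n (view_offset p m)"
    and diag: "\<And>i j. i < n \<Longrightarrow> j < view_offset p m \<Longrightarrow> i \<noteq> j \<Longrightarrow> D $$ (i,j) = 0"
    and svd: "multiview n m p Xs = U * D * transpose_mat V"
    and "k \<le> n" "k \<le> view_offset p m" and Q: "orthogonal_real_mat k Q"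
  shows "mat_trace (transpose_mat (first_cols k U * Q) * (Xs v * transpose_mat (Xs v)) * (first_cols k U * Q))
    = (\<Sum>w<m. mat_trace (transpose_mat (V_view_top p k V v) * transpose_mat (Xs v) * Xs w * V_view_top p k V w))"
proof -
  define X where "X = multiview n m p Xs"
  let ?P = "view_offset p m" and ?Uk = "first_cols k U" and ?Vk = "first_cols k V"
  let ?Vv = "V_view_top p k V v"
  have X: "X \<in> carrier_mat n ?P"
    by (simp add: X_def multiview_def view_offset_def)
  have Uk: "?Uk \<in> carrier_mat n k" and Vk: "?Vk \<in> carrier_mat ?P k"
    using U V by (auto simp: orthogonal_real_mat_def first_cols_def)
  have S: "leading_block k D \<in> carrier_mat k k"
    by (simp add: leading_block_def)
  have Xs_block: "Xs w = col_block (view_offset p w) (p w) X" if "w < m" for w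
    using multiview_col_block[of w m Xs n p] that Xs by (simp add: X_def)
  have V_block: "V_view_top p k V w = row_block (view_offset p w) (p w) ?Vk" if "w < m" for w
    using V view_offset_add_le[OF that] \<open>k \<le> ?P\<close>
    by (intro V_view_top_eq_row_block) (auto simp: orthogonal_real_mat_def)
  have C: "transpose_mat ?Vv * transpose_mat (Xs v) \<in> carrier_mat k n"
    using mult_carrier_mat[of "transpose_mat ?Vv" k "p v" "transpose_mat (Xs v)" n] Vk Xs[OF \<open>v < m\<close>]
    by (simp add: V_block[OF \<open>v < m\<close>] row_block_def)
  have "mat_trace (transpose_mat (?Uk * Q) * (Xs v * transpose_mat (Xs v)) * (?Uk * Q))
      = mat_trace (transpose_mat ?Vv * transpose_mat (Xs v) * (X * ?Vk))"
    using mat_trace_view_kernel_eq_cross[OF Q X view_offset_add_le[OF \<open>v < m\<close>] Uk Vk S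
        svd_truncated[OF U V D diag svd[folded X_def] \<open>k \<le> n\<close> \<open>k \<le> ?P\<close>]]
    by (simp add: Xs_block[OF \<open>v < m\<close>] V_block[OF \<open>v < m\<close>])
  also have "\<dots> = (\<Sum>w<m. mat_trace (transpose_mat ?Vv * transpose_mat (Xs v) * Xs w * V_view_top p k V w))"
    using mat_trace_mult_sum_view_blocks[OF C X Vk] by (simp add: Xs_block V_block)
  finally show ?thesis .
qed

theorem proposition1:
  fixes m n k :: nat and p :: "nat \<Rightarrow> nat" and Xs :: "nat \<Rightarrow> real mat"
    and U D V Q :: "real mat"
  assumes "m \<ge> 1" and "n > 0" and "k > 0"
    and "\<And>v. v < m \<Longrightarrow> p v > 0"
    and "\<And>v. v < m \<Longrightarrow> Xs v \<in> carrier_mat n (p v)"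
    and "\<And>v. v < m \<Longrightarrow> centered (Xs v)"
    and "k \<le> n" and "k \<le> (\<Sum>w<m. p w)"
    and "orthogonal_real_mat n U"
    and "orthogonal_real_mat (\<Sum>w<m. p w) V"
    and "D \<in> carrier_mat n (\<Sum>w<m. p w)" and "ordered_rect_diag D"
    and "multiview n m p Xs = U * D * transpose_mat V"
    and "orthogonal_real_mat k Q"
  shows "\<forall>v<m.
     (let H = first_cols k U * Q;
          K = Xs v * transpose_mat (Xs v);
          Vv = V_view_top p k V v
      in mat_trace (transpose_mat H * K * H) =
         mat_trace (transpose_mat Vv * transpose_mat (Xs v) * Xs v * Vv)
         + (\<Sum>w\<in>{..<m} - {v}.
              mat_trace (transpose_mat Vv * transpose_mat (Xs v) * Xs w * V_view_top p k V w)))"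
proof -
  have P: "(\<Sum>w<m. p w) = view_offset p m"
    by (simp add: view_offset_def)
  have diag: "D $$ (i,j) = 0" if "i < n" "j < view_offset p m" "i \<noteq> j" for i j
    using assms(11,12) that by (auto simp: ordered_rect_diag_def P)
  let ?T = "\<lambda>v w. mat_trace (transpose_mat (V_view_top p k V v) * transpose_mat (Xs v) * Xs w * V_view_top p k V w)"
  have "mat_trace (transpose_mat (first_cols k U * Q) * (Xs v * transpose_mat (Xs v)) * (first_cols k U * Q))
      = ?T v v + (\<Sum>w\<in>{..<m} - {v}. ?T v w)" if "v < m" for v
    using mat_trace_view_eq_sum_cross_traces[OF that assms(5) assms(9,10,11)[unfolded P] diag
        assms(13) assms(7) assms(8)[unfolded P] assms(14)]
      sum.remove[of "{..<m}" v "?T v"] that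
    by simp
  then show ?thesis
    by (simp add: Let_def)
qed

end
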